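(* Let $\mathcal{V}$ be a multivector field on a Lefschetz complex $X$ and let $\varphi:\mathbb{Z}\to X$ be an essential solution of $\mathcal{V}$. Then both limit sets $\alpha(\varphi)$ and $\omega(\varphi)$ are nonempty isolated invariant sets.
   Context: A Lefschetz complex over a field $F$ is a pair $(X,\kappa)$ with $X$ a finite graded set $X=\bigsqcup_{k\ge0}X_k$ and $\kappa:X\times X\to F$ such that $\kappa(x,y)\ne0$ implies $x\in X_k,y\in X_{k-1}$ for some $k$, and $\sum_z\kappa(x,z)\kappa(z,y)=0$. The face relation $\le$ is the partial order generated by $y\le x$ whenever $\kappa(x,y)\ne0$. $\mathrm{cl}\,C$ denotes the set of all faces of elements of $C$; $C$ is closed if $C=\mathrm{cl}\,C$; $C$ is locally closed if $\mathrm{mo}\,C=\mathrm{cl}\,C\setminus C$ is closed. For locally closed $C$, the relative homology $H_*(\mathrm{cl}\,C,\mathrm{mo}\,C)$ (of the chain complex with boundary $\partial x=\sum_y\kappa(x,y)y$) is defined. A multivector field $\mathcal{V}$ is a partition of $X$ into locally closed sets (multivectors); a multivector $V$ is regular if $H_*(\mathrm{cl}\,V,\mathrm{mo}\,V)=0$ and critical otherwise; $[x]_{\mathcal V}$ is the multivector containing $x$. The flow map is the multivalued map $\Pi_{\mathcal V}(x)=\mathrm{cl}\{x\}\cup[x]_{\mathcal V}$. A path is a finite sequence $x_0,\dots,x_n$ with $x_k\in\Pi_{\mathcal V}(x_{k-1})$; a solution is a map $\rho:\mathbb{Z}\to X$ with $\rho(k+1)\in\Pi_{\mathcal V}(\rho(k))$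 for all $k$. A solution $\rho$ is essential if whenever $\rho(k)$ lies in a regular multivector $V$, there exist integers $\ell_1<k<\ell_2$ with $\rho(\ell_1),\rho(\ell_2)\notin V$. A set $A\subset X$ is invariant if for every $x\in A$ there is an essential solution $\rho$ with $\rho(0)=x$ and $\rho(\mathbb{Z})\subset A$. A set is $\mathcal V$-compatible if it is a union of multivectors. A closed set $N$ isolates an invariant set $S\subset N$ if every path in $N$ with both endpoints in $S$ lies entirely in $S$, and $\Pi_{\mathcal V}(S)\subset N$; $S$ is an isolated invariant set if some closed $N$ isolates it. The $\mathcal V$-hull $\langle A\rangle_{\mathcal V}$ of $A\subset X$ is the intersection of all $\mathcal V$-compatible locally closed sets containing $A$. For a solution $\varphi$, $\alpha(\varphi)=\langle\bigcap_{t\in\mathbb{Z}^-}\varphi((-\infty,t])\rangle_{\mathcal V}$ and $\omega(\varphi)=\langle\bigcap_{t\in\mathbb{Z}^+}\varphi([t,\infty))\rangle_{\mathcal V}$. *)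

theory Defs
  imports Main
begin

definition lefschetz_complex :: "'a set \<Rightarrow> ('a \<Rightarrow> nat) \<Rightarrow> ('a \<Rightarrow> 'a \<Rightarrow> 'f::field) \<Rightarrow> bool" where
  "lefschetz_complex X dim kappa \<longleftrightarrow>
     finite X \<and>
     (\<forall>x y. kappa x y \<noteq> 0 \<longrightarrow> x \<in> X \<and> y \<in> X \<and> dim x = dim y + 1) \<and>
     (\<forall>x\<in>X. \<forall>y\<in>X. (\<Sum>z\<in>X. kappa x z * kappa z y) = 0)"

definition face_rel :: "('a \<Rightarrow> 'a \<Rightarrow> 'f::field) \<Rightarrow> ('a \<times> 'a) set" where
  "face_rel kappa = {(y, x). kappa x y \<noteq> 0}\<^sup>*"

definition lcl :: "('a \<Rightarrow> 'a \<Rightarrow> 'f::field) \<Rightarrow> 'a set \<Rightarrow> 'a set" where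
  "lcl kappa C = {y. \<exists>x\<in>C. (y, x) \<in> face_rel kappa}"

definition lclosed :: "('a \<Rightarrow> 'a \<Rightarrow> 'f::field) \<Rightarrow> 'a set \<Rightarrow> bool" where
  "lclosed kappa C \<longleftrightarrow> lcl kappa C = C"

definition mouth :: "('a \<Rightarrow> 'a \<Rightarrow> 'f::field) \<Rightarrow> 'a set \<Rightarrow> 'a set" where
  "mouth kappa C = lcl kappa C - C"

definition locally_closed :: "('a \<Rightarrow> 'a \<Rightarrow> 'f::field) \<Rightarrow> 'a set \<Rightarrow> bool" where
  "locally_closed kappa C \<longleftrightarrow> lclosed kappa (mouth kappa C)"

text \<open>Vanishing of the relative homology H_*(cl C, mo C) for locally closed C.
  The relative chain complex has basis cl C - mo C = C; a k-chain is a function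
  supported on the elements of C of degree k, and the relative boundary is
  (d c)(y) = sum over x in C of c x * kappa x y, for y in C.\<close>
definition rel_boundary :: "('a \<Rightarrow> 'a \<Rightarrow> 'f::field) \<Rightarrow> 'a set \<Rightarrow> ('a \<Rightarrow> 'f) \<Rightarrow> 'a \<Rightarrow> 'f" where
  "rel_boundary kappa C c = (\<lambda>y. if y \<in> C then (\<Sum>x\<in>C. c x * kappa x y) else 0)"

definition chain_in :: "('a \<Rightarrow> nat) \<Rightarrow> 'a set \<Rightarrow> nat \<Rightarrow> ('a \<Rightarrow> 'f::zero) \<Rightarrow> bool" where
  "chain_in dim C k c \<longleftrightarrow> (\<forall>x. c x \<noteq> 0 \<longrightarrow> x \<in> C \<and> dim x = k)"

definition rel_homology_zero :: "('a \<Rightarrow> nat) \<Rightarrow> ('a \<Rightarrow> 'a \<Rightarrow> 'f::field) \<Rightarrow> 'a set \<Rightarrow> bool" where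
  "rel_homology_zero dim kappa C \<longleftrightarrow>
     (\<forall>k c. chain_in dim C k c \<and> rel_boundary kappa C c = (\<lambda>_. 0) \<longrightarrow>
        (\<exists>d. chain_in dim C (Suc k) d \<and> rel_boundary kappa C d = c))"

definition multivector_field :: "'a set \<Rightarrow> ('a \<Rightarrow> 'a \<Rightarrow> 'f::field) \<Rightarrow> 'a set set \<Rightarrow> bool" where
  "multivector_field X kappa V \<longleftrightarrow>
     (\<forall>A\<in>V. A \<noteq> {} \<and> A \<subseteq> X \<and> locally_closed kappa A) \<and>
     (\<forall>A\<in>V. \<forall>B\<in>V. A \<noteq> B \<longrightarrow> A \<inter> B = {}) \<and>
     \<Union>V = X"

definition regular_mv :: "('a \<Rightarrow> nat) \<Rightarrow> ('a \<Rightarrow> 'a \<Rightarrow> 'f::field) \<Rightarrow> 'a set \<Rightarrow> bool" where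
  "regular_mv dim kappa A \<longleftrightarrow> rel_homology_zero dim kappa A"

definition mv_of :: "'a set set \<Rightarrow> 'a \<Rightarrow> 'a set" where
  "mv_of V x = (THE A. A \<in> V \<and> x \<in> A)"

definition flow_map :: "('a \<Rightarrow> 'a \<Rightarrow> 'f::field) \<Rightarrow> 'a set set \<Rightarrow> 'a \<Rightarrow> 'a set" where
  "flow_map kappa V x = lcl kappa {x} \<union> mv_of V x"

definition is_path :: "('a \<Rightarrow> 'a \<Rightarrow> 'f::field) \<Rightarrow> 'a set set \<Rightarrow> 'a list \<Rightarrow> bool" where
  "is_path kappa V xs \<longleftrightarrow> xs \<noteq> [] \<and>
     (\<forall>i. Suc i < length xs \<longrightarrow> xs ! Suc i \<in> flow_map kappa V (xs ! i))"

definition is_solution :: "'a set \<Rightarrow> ('a \<Rightarrow> 'a \<Rightarrow> 'f::field) \<Rightarrow> 'a set set \<Rightarrow> (int \<Rightarrow> 'a) \<Rightarrow> bool" where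
  "is_solution X kappa V \<rho> \<longleftrightarrow> range \<rho> \<subseteq> X \<and> (\<forall>k. \<rho> (k + 1) \<in> flow_map kappa V (\<rho> k))"

definition essential_solution ::
  "'a set \<Rightarrow> ('a \<Rightarrow> nat) \<Rightarrow> ('a \<Rightarrow> 'a \<Rightarrow> 'f::field) \<Rightarrow> 'a set set \<Rightarrow> (int \<Rightarrow> 'a) \<Rightarrow> bool" where
  "essential_solution X dim kappa V \<rho> \<longleftrightarrow> is_solution X kappa V \<rho> \<and>
     (\<forall>k. regular_mv dim kappa (mv_of V (\<rho> k)) \<longrightarrow>
        (\<exists>l1 l2. l1 < k \<and> k < l2 \<and> \<rho> l1 \<notin> mv_of V (\<rho> k) \<and> \<rho> l2 \<notin> mv_of V (\<rho> k)))"

definition invariant_set ::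
  "'a set \<Rightarrow> ('a \<Rightarrow> nat) \<Rightarrow> ('a \<Rightarrow> 'a \<Rightarrow> 'f::field) \<Rightarrow> 'a set set \<Rightarrow> 'a set \<Rightarrow> bool" where
  "invariant_set X dim kappa V A \<longleftrightarrow>
     (\<forall>x\<in>A. \<exists>\<rho>. essential_solution X dim kappa V \<rho> \<and> \<rho> 0 = x \<and> range \<rho> \<subseteq> A)"

definition isolates :: "'a set \<Rightarrow> ('a \<Rightarrow> 'a \<Rightarrow> 'f::field) \<Rightarrow> 'a set set \<Rightarrow> 'a set \<Rightarrow> 'a set \<Rightarrow> bool" where
  "isolates X kappa V N S \<longleftrightarrow> N \<subseteq> X \<and> lclosed kappa N \<and> S \<subseteq> N \<and>
     (\<forall>xs. is_path kappa V xs \<and> set xs \<subseteq> N \<and> hd xs \<in> S \<and> last xs \<in> S \<longrightarrow> set xs \<subseteq> S) \<and>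
     (\<Union>x\<in>S. flow_map kappa V x) \<subseteq> N"

definition isolated_invariant_set ::
  "'a set \<Rightarrow> ('a \<Rightarrow> nat) \<Rightarrow> ('a \<Rightarrow> 'a \<Rightarrow> 'f::field) \<Rightarrow> 'a set set \<Rightarrow> 'a set \<Rightarrow> bool" where
  "isolated_invariant_set X dim kappa V S \<longleftrightarrow>
     invariant_set X dim kappa V S \<and> (\<exists>N. isolates X kappa V N S)"

definition V_compatible :: "'a set set \<Rightarrow> 'a set \<Rightarrow> bool" where
  "V_compatible V A \<longleftrightarrow> (\<exists>W\<subseteq>V. A = \<Union>W)"

definition V_hull :: "('a \<Rightarrow> 'a \<Rightarrow> 'f::field) \<Rightarrow> 'a set set \<Rightarrow> 'a set \<Rightarrow> 'a set" where
  "V_hull kappa V A = \<Inter>{B. V_compatible V B \<and> locally_closed kappa B \<and> A \<subseteq> B}"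

definition alpha_limit :: "('a \<Rightarrow> 'a \<Rightarrow> 'f::field) \<Rightarrow> 'a set set \<Rightarrow> (int \<Rightarrow> 'a) \<Rightarrow> 'a set" where
  "alpha_limit kappa V \<phi> = V_hull kappa V (\<Inter>t\<in>{..0::int}. \<phi> ` {..t})"

definition omega_limit :: "('a \<Rightarrow> 'a \<Rightarrow> 'f::field) \<Rightarrow> 'a set set \<Rightarrow> (int \<Rightarrow> 'a) \<Rightarrow> 'a set" where
  "omega_limit kappa V \<phi> = V_hull kappa V (\<Inter>t\<in>{0::int..}. \<phi> ` {t..})"

end

theory Submission
  imports Defs
begin

text \<open>
  Since X is finite, a solution eventually moves only among the points U it visits at arbitrarily
  late times (resp. early times for the alpha-limit); consecutive visits give flow paths inside U
  between any two of its points, and essentiality prevents U from lying in one regular multivector.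
  The points of the V-hull H of U lying on flow loops in H through all of U form a V-compatible,
  locally closed set containing U, hence all of H. Going around such a loop through a point of H
  and a point of U not sharing a regular multivector with it is an essential periodic solution, so
  H is invariant. Finally the closure of H isolates H: the flow map cannot lead from the mouth of a
  locally closed V-compatible set back into it.
\<close>

section \<open>Faces, closures and V-hulls\<close>

lemma face_rel_in_carrier:
  assumes "lefschetz_complex X dim kappa" and "(y, x) \<in> face_rel kappa" and "x \<in> X"
  shows "y \<in> X"
  using assms(2,3) unfolding face_rel_def
proof (induction rule: converse_rtrancl_induct)
  case (step y z)
  then show ?case using assms(1) unfolding lefschetz_complex_def by auto
qed

lemma subset_lcl: "C \<subseteq> lcl kappa C"
  unfolding lcl_def face_rel_def by blast

lemma lclosed_lcl: "lclosed kappa (lcl kappa C)"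
  unfolding lclosed_def lcl_def face_rel_def by (blast intro: rtrancl_trans)

lemma lcl_subset_carrier:
  assumes "lefschetz_complex X dim kappa" and "C \<subseteq> X"
  shows "lcl kappa C \<subseteq> X"
  using face_rel_in_carrier[OF assms(1)] assms(2) unfolding lcl_def by blast

lemma locally_closed_iff_convex:
  "locally_closed kappa C \<longleftrightarrow>
   (\<forall>a\<in>C. \<forall>b\<in>C. \<forall>y. (a, y) \<in> face_rel kappa \<longrightarrow> (y, b) \<in> face_rel kappa \<longrightarrow> y \<in> C)"
  unfolding locally_closed_def lclosed_def mouth_def lcl_def face_rel_def
  by (blast intro: rtrancl_trans)

lemma carrier_locally_closed:
  assumes "lefschetz_complex X dim kappa"
  shows "locally_closed kappa X"
  unfolding locally_closed_iff_convex using face_rel_in_carrier[OF assms] by blast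

lemma mv_of_eq:
  assumes "multivector_field X kappa V" and "A \<in> V" and "x \<in> A"
  shows "mv_of V x = A"
  unfolding mv_of_def
proof (rule the_equality)
  show "A \<in> V \<and> x \<in> A" using assms(2,3) ..
next
  fix B assume "B \<in> V \<and> x \<in> B"
  then show "B = A" using assms unfolding multivector_field_def by blast
qed

lemma mv_of_mem:
  assumes "multivector_field X kappa V" and "x \<in> X"
  shows "mv_of V x \<in> V" and "x \<in> mv_of V x"
proof -
  obtain A where "A \<in> V" and "x \<in> A"
    using assms unfolding multivector_field_def by blast
  then show "mv_of V x \<in> V" and "x \<in> mv_of V x"
    using mv_of_eq[OF assms(1)] by simp_all
qed

lemma mem_flow_map_self:
  assumes "multivector_field X kappa V" and "x \<in> X"
  shows "x \<in> flow_map kappa V x"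
  unfolding flow_map_def using mv_of_mem(2)[OF assms] by blast

lemma V_compatible_subset_carrier:
  assumes "multivector_field X kappa V" and "V_compatible V B"
  shows "B \<subseteq> X"
  using assms unfolding multivector_field_def V_compatible_def by blast

lemma V_compatible_iff:
  assumes "multivector_field X kappa V" and "B \<subseteq> X"
  shows "V_compatible V B \<longleftrightarrow> (\<forall>x\<in>B. mv_of V x \<subseteq> B)"
proof
  assume "V_compatible V B"
  then obtain W where "W \<subseteq> V" and "B = \<Union>W"
    unfolding V_compatible_def by blast
  then show "\<forall>x\<in>B. mv_of V x \<subseteq> B"
    using mv_of_eq[OF assms(1)] by blast
next
  assume "\<forall>x\<in>B. mv_of V x \<subseteq> B"
  then have "B = \<Union>{A\<in>V. A \<subseteq> B}"
    using mv_of_mem[OF assms(1)] assms(2) by blast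
  then show "V_compatible V B"
    unfolding V_compatible_def by (intro exI[of _ "{A\<in>V. A \<subseteq> B}"]) auto
qed

lemma carrier_V_compatible:
  assumes "multivector_field X kappa V"
  shows "V_compatible V X"
  using assms unfolding multivector_field_def V_compatible_def by blast

lemma V_hull_least:
  assumes "A \<subseteq> B" and "V_compatible V B" and "locally_closed kappa B"
  shows "V_hull kappa V A \<subseteq> B"
  using assms unfolding V_hull_def by blast

lemma subset_V_hull: "A \<subseteq> V_hull kappa V A"
  unfolding V_hull_def by blast

lemma V_hull_subset_carrier:
  assumes "lefschetz_complex X dim kappa" and "multivector_field X kappa V" and "A \<subseteq> X"
  shows "V_hull kappa V A \<subseteq> X"
  by (rule V_hull_least[OF assms(3) carrier_V_compatible[OF assms(2)] carrier_locally_closed[OF assms(1)]])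

lemma V_hull_V_compatible:
  assumes "lefschetz_complex X dim kappa" and "multivector_field X kappa V" and "A \<subseteq> X"
  shows "V_compatible V (V_hull kappa V A)"
proof -
  have "y \<in> V_hull kappa V A" if "x \<in> V_hull kappa V A" and "y \<in> mv_of V x" for x y
    unfolding V_hull_def
  proof (rule InterI)
    fix B assume "B \<in> {B. V_compatible V B \<and> locally_closed kappa B \<and> A \<subseteq> B}"
    then have "V_compatible V B" and "x \<in> B"
      using that(1) unfolding V_hull_def by blast+
    then show "y \<in> B"
      using that(2) V_compatible_iff[OF assms(2) V_compatible_subset_carrier[OF assms(2)]] by blast
  qed
  then show ?thesis
    using V_compatible_iff[OF assms(2) V_hull_subset_carrier[OF assms]] by blast
qed

lemma V_hull_locally_closed: "locally_closed kappa (V_hull kappa V A)"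
  unfolding locally_closed_iff_convex
proof (intro ballI allI impI)
  fix a b y
  assume a: "a \<in> V_hull kappa V A" and b: "b \<in> V_hull kappa V A"
    and ay: "(a, y) \<in> face_rel kappa" and yb: "(y, b) \<in> face_rel kappa"
  show "y \<in> V_hull kappa V A"
    unfolding V_hull_def
  proof (rule InterI)
    fix B assume "B \<in> {B. V_compatible V B \<and> locally_closed kappa B \<and> A \<subseteq> B}"
    then have "locally_closed kappa B" and "a \<in> B" and "b \<in> B"
      using a b unfolding V_hull_def by blast+
    then show "y \<in> B"
      using ay yb unfolding locally_closed_iff_convex by blast
  qed
qed

section \<open>Flow loops through a subset of the V-hull\<close>

definition flow_rel :: "('a \<Rightarrow> 'a \<Rightarrow> 'f::field) \<Rightarrow> 'a set set \<Rightarrow> 'a set \<Rightarrow> ('a \<times> 'a) set" where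
  "flow_rel kappa V S = {(a, b). a \<in> S \<and> b \<in> S \<and> b \<in> flow_map kappa V a}"

lemma flow_rel_mono: "S \<subseteq> T \<Longrightarrow> flow_rel kappa V S \<subseteq> flow_rel kappa V T"
  unfolding flow_rel_def by blast

definition flow_loops_through :: "('a \<Rightarrow> 'a \<Rightarrow> 'f::field) \<Rightarrow> 'a set set \<Rightarrow> 'a set \<Rightarrow> 'a set \<Rightarrow> 'a set" where
  "flow_loops_through kappa V H U =
     {x\<in>H. \<forall>u\<in>U. (u, x) \<in> (flow_rel kappa V H)\<^sup>* \<and> (x, u) \<in> (flow_rel kappa V H)\<^sup>*}"

lemma V_compatible_flow_loops_through:
  assumes MV: "multivector_field X kappa V"
    and "H \<subseteq> X" and "V_compatible V H"
  shows "V_compatible V (flow_loops_through kappa V H U)"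
proof -
  let ?r = "flow_rel kappa V H" and ?R = "flow_loops_through kappa V H U"
  have "y \<in> ?R" if x: "x \<in> ?R" and y: "y \<in> mv_of V x" for x y
  proof -
    have "x \<in> H" and "x \<in> X"
      using x \<open>H \<subseteq> X\<close> unfolding flow_loops_through_def by auto
    then have "y \<in> H"
      using y \<open>V_compatible V H\<close> V_compatible_iff[OF MV \<open>H \<subseteq> X\<close>] by blast
    have "mv_of V y = mv_of V x"
      using mv_of_eq[OF MV mv_of_mem(1)[OF MV \<open>x \<in> X\<close>] y] .
    then have "(x, y) \<in> ?r" and "(y, x) \<in> ?r"
      using y mv_of_mem(2)[OF MV \<open>x \<in> X\<close>] \<open>x \<in> H\<close> \<open>y \<in> H\<close>
      unfolding flow_rel_def flow_map_def by auto
    then show "y \<in> ?R"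
      using x \<open>y \<in> H\<close> unfolding flow_loops_through_def
      by (blast intro: rtrancl_into_rtrancl converse_rtrancl_into_rtrancl)
  qed
  moreover have "?R \<subseteq> X"
    using \<open>H \<subseteq> X\<close> unfolding flow_loops_through_def by blast
  ultimately show ?thesis
    using V_compatible_iff[OF MV] by blast
qed

lemma locally_closed_flow_loops_through:
  assumes "locally_closed kappa H"
  shows "locally_closed kappa (flow_loops_through kappa V H U)"
  unfolding locally_closed_iff_convex
proof (intro ballI allI impI)
  let ?r = "flow_rel kappa V H" and ?R = "flow_loops_through kappa V H U"
  fix a b y assume a: "a \<in> ?R" and b: "b \<in> ?R"
    and ay: "(a, y) \<in> face_rel kappa" and yb: "(y, b) \<in> face_rel kappa"
  have "y \<in> H"
    using a b ay yb assms unfolding flow_loops_through_def locally_closed_iff_convex by blast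
  \<comment> \<open>a face may always be entered: b flows to its face y, and y to its face a\<close>
  then have "(b, y) \<in> ?r" and "(y, a) \<in> ?r"
    using a b ay yb unfolding flow_loops_through_def flow_rel_def flow_map_def lcl_def by auto
  then show "y \<in> ?R"
    using a b \<open>y \<in> H\<close> unfolding flow_loops_through_def
    by (blast intro: rtrancl_into_rtrancl converse_rtrancl_into_rtrancl)
qed

lemma V_hull_subset_flow_loops_through:
  assumes LC: "lefschetz_complex X dim kappa" and MV: "multivector_field X kappa V"
    and "U \<subseteq> X"
    and connected: "\<forall>u\<in>U. \<forall>u'\<in>U. (u, u') \<in> (flow_rel kappa V U)\<^sup>*"
  shows "V_hull kappa V U \<subseteq> flow_loops_through kappa V (V_hull kappa V U) U"
proof (rule V_hull_least)
  let ?H = "V_hull kappa V U"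
  have "U \<subseteq> ?H"
    by (rule subset_V_hull)
  then have "(flow_rel kappa V U)\<^sup>* \<subseteq> (flow_rel kappa V ?H)\<^sup>*"
    by (intro rtrancl_mono flow_rel_mono)
  then show "U \<subseteq> flow_loops_through kappa V ?H U"
    unfolding flow_loops_through_def using connected \<open>U \<subseteq> ?H\<close> by blast
  show "V_compatible V (flow_loops_through kappa V ?H U)"
    using V_compatible_flow_loops_through[OF MV V_hull_subset_carrier[OF LC MV \<open>U \<subseteq> X\<close>]
        V_hull_V_compatible[OF LC MV \<open>U \<subseteq> X\<close>]] .
  show "locally_closed kappa (flow_loops_through kappa V ?H U)"
    using locally_closed_flow_loops_through[OF V_hull_locally_closed] .
qed

section \<open>Isolation by the closure\<close>

lemma mouth_flow_map_disjoint:
  assumes LC: "lefschetz_complex X dim kappa" and MV: "multivector_field X kappa V"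
    and "H \<subseteq> X" and "V_compatible V H" and "locally_closed kappa H"
    and "w \<in> mouth kappa H"
  shows "flow_map kappa V w \<inter> H = {}"
proof (rule equals0I)
  fix z assume "z \<in> flow_map kappa V w \<inter> H"
  then have "z \<in> flow_map kappa V w" and "z \<in> H"
    by auto
  obtain h where "h \<in> H" and "(w, h) \<in> face_rel kappa" and "w \<notin> H"
    using \<open>w \<in> mouth kappa H\<close> unfolding mouth_def lcl_def by blast
  have "w \<in> X"
    using lcl_subset_carrier[OF LC \<open>H \<subseteq> X\<close>] \<open>w \<in> mouth kappa H\<close> unfolding mouth_def by blast
  from \<open>z \<in> flow_map kappa V w\<close> consider "(z, w) \<in> face_rel kappa" | "z \<in> mv_of V w"
    unfolding flow_map_def lcl_def by blast
  then show False
  proof cases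
    case 1
    then show False
      using \<open>z \<in> H\<close> \<open>h \<in> H\<close> \<open>(w, h) \<in> face_rel kappa\<close> \<open>w \<notin> H\<close> \<open>locally_closed kappa H\<close>
      unfolding locally_closed_iff_convex by blast
  next
    case 2
    then have "mv_of V z = mv_of V w"
      using mv_of_eq[OF MV mv_of_mem(1)[OF MV \<open>w \<in> X\<close>]] by blast
    then show False
      using \<open>z \<in> H\<close> \<open>w \<notin> H\<close> mv_of_mem(2)[OF MV \<open>w \<in> X\<close>] \<open>V_compatible V H\<close>
        V_compatible_iff[OF MV \<open>H \<subseteq> X\<close>] by auto
  qed
qed

lemma isolates_lcl:
  assumes LC: "lefschetz_complex X dim kappa" and MV: "multivector_field X kappa V"
    and "H \<subseteq> X" and "V_compatible V H" and "locally_closed kappa H"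
  shows "isolates X kappa V (lcl kappa H) H"
  unfolding isolates_def
proof (intro conjI allI impI)
  show "lcl kappa H \<subseteq> X"
    using lcl_subset_carrier[OF LC \<open>H \<subseteq> X\<close>] .
  show "lclosed kappa (lcl kappa H)"
    by (rule lclosed_lcl)
  show "H \<subseteq> lcl kappa H"
    by (rule subset_lcl)
  have "mv_of V x \<subseteq> H" if "x \<in> H" for x
    using that \<open>V_compatible V H\<close> V_compatible_iff[OF MV \<open>H \<subseteq> X\<close>] by blast
  then show "(\<Union>x\<in>H. flow_map kappa V x) \<subseteq> lcl kappa H"
    using subset_lcl[of H kappa] unfolding flow_map_def lcl_def by blast
next
  fix xs
  assume xs: "is_path kappa V xs \<and> set xs \<subseteq> lcl kappa H \<and> hd xs \<in> H \<and> last xs \<in> H"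
  then have "xs \<noteq> []" unfolding is_path_def by blast
  have "xs ! i \<in> H" if "i \<le> length xs - 1" for i
    using that
  proof (induction rule: inc_induct)
    case base
    then show ?case
      using xs \<open>xs \<noteq> []\<close> by (simp add: last_conv_nth)
  next
    case (step i)
    then have "xs ! Suc i \<in> flow_map kappa V (xs ! i)" and "xs ! i \<in> lcl kappa H"
      using xs unfolding is_path_def by auto
    then show ?case
      using mouth_flow_map_disjoint[OF LC MV assms(3-5)] step.IH unfolding mouth_def by blast
  qed
  then show "set xs \<subseteq> H"
    by (auto simp: in_set_conv_nth)
qed

section \<open>Invariance via periodic solutions\<close>

lemma relpow_concat_fun:
  assumes "(x, y) \<in> R ^^ m" and "(y, z) \<in> R ^^ n"
  obtains f where "f 0 = x" and "f m = y" and "f (m + n) = z"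
    and "\<forall>i<m + n. (f i, f (Suc i)) \<in> R"
proof -
  obtain g where g: "g 0 = x" "g m = y" "\<forall>i<m. (g i, g (Suc i)) \<in> R"
    using assms(1) unfolding relpow_fun_conv by blast
  obtain h where h: "h 0 = y" "h n = z" "\<forall>i<n. (h i, h (Suc i)) \<in> R"
    using assms(2) unfolding relpow_fun_conv by blast
  define f where "f i = (if i \<le> m then g i else h (i - m))" for i
  have f_shift: "f i = h (i - m)" if "m \<le> i" for i
    using that g(2) h(1) unfolding f_def by auto
  show thesis
  proof (rule that)
    show "f 0 = x" "f m = y" "f (m + n) = z"
      using g h f_shift unfolding f_def by auto
    show "\<forall>i<m + n. (f i, f (Suc i)) \<in> R"
    proof (intro allI impI)
      fix i assume "i < m + n"
      show "(f i, f (Suc i)) \<in> R"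
      proof (cases "i < m")
        case True
        then show ?thesis using g(3) unfolding f_def by simp
      next
        case False
        then have "f i = h (i - m)" and "f (Suc i) = h (Suc (i - m))"
          using f_shift by (simp_all add: Suc_diff_le)
        then show ?thesis using h(3) \<open>i < m + n\<close> False by simp
      qed
    qed
  qed
qed

lemma nat_add_one_mod:
  fixes k :: int
  assumes "0 < n"
  shows "nat ((k + 1) mod int n) = Suc (nat (k mod int n)) mod n"
proof -
  have "0 \<le> k mod int n"
    using assms by simp
  have "(k + 1) mod int n = (k mod int n + 1) mod int n"
    by (simp add: mod_add_left_eq)
  also have "\<dots> = int (Suc (nat (k mod int n)) mod n)"
    using \<open>0 \<le> k mod int n\<close> by (simp add: zmod_int add.commute)
  finally show ?thesis by simp
qed

lemma periodic_solution:
  assumes "0 < n" and "f n = f 0" and "S \<subseteq> X"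
    and steps: "\<forall>i<n. (f i, f (Suc i)) \<in> flow_rel kappa V S"
  defines "\<rho> \<equiv> \<lambda>k. f (nat (k mod int n))"
  shows "is_solution X kappa V \<rho>" and "range \<rho> = f ` {..<n}"
proof -
  have index_bound: "nat (k mod int n) < n" for k
    using \<open>0 < n\<close> by (simp add: nat_less_iff)
  show range_eq: "range \<rho> = f ` {..<n}"
  proof
    show "range \<rho> \<subseteq> f ` {..<n}"
      unfolding \<rho>_def using index_bound by blast
    show "f ` {..<n} \<subseteq> range \<rho>"
    proof
      fix y assume "y \<in> f ` {..<n}"
      then obtain i where "i < n" and "y = f i" by blast
      then have "y = \<rho> (int i)" unfolding \<rho>_def by simp
      then show "y \<in> range \<rho>" by blast
    qed
  qed
  have next_index: "\<rho> (k + 1) = f (Suc (nat (k mod int n)))" for k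
  proof -
    have "\<rho> (k + 1) = f (Suc (nat (k mod int n)) mod n)"
      unfolding \<rho>_def using nat_add_one_mod[OF \<open>0 < n\<close>] by simp
    also have "\<dots> = f (Suc (nat (k mod int n)))"
      using index_bound[of k] \<open>f n = f 0\<close> by (cases "Suc (nat (k mod int n)) = n") auto
    finally show ?thesis .
  qed
  show "is_solution X kappa V \<rho>"
    unfolding is_solution_def
  proof
    have "f i \<in> S" if "i < n" for i
      using steps that unfolding flow_rel_def by blast
    then show "range \<rho> \<subseteq> X"
      unfolding range_eq using \<open>S \<subseteq> X\<close> by blast
    show "\<forall>k. \<rho> (k + 1) \<in> flow_map kappa V (\<rho> k)"
    proof
      fix k
      have "(f (nat (k mod int n)), f (Suc (nat (k mod int n)))) \<in> flow_rel kappa V S"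
        using steps index_bound by blast
      then show "\<rho> (k + 1) \<in> flow_map kappa V (\<rho> k)"
        unfolding next_index unfolding \<rho>_def flow_rel_def by simp
    qed
  qed
qed

lemma essential_if_periodic:
  assumes MV: "multivector_field X kappa V" and sol: "is_solution X kappa V \<rho>"
    and "0 < n" and periodic: "\<And>k. \<rho> k = \<rho> (k mod int n)"
    and no_regular: "\<forall>A\<in>V. regular_mv dim kappa A \<longrightarrow> \<not> range \<rho> \<subseteq> A"
  shows "essential_solution X dim kappa V \<rho>"
  unfolding essential_solution_def
proof (intro conjI sol allI impI)
  fix k
  define A where "A = mv_of V (\<rho> k)"
  assume "regular_mv dim kappa (mv_of V (\<rho> k))"
  moreover have "\<rho> k \<in> X"
    using sol unfolding is_solution_def by blast
  ultimately have "A \<in> V" and "\<rho> k \<in> A" and "regular_mv dim kappa A"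
    using mv_of_mem[OF MV] unfolding A_def by auto
  then obtain m where "\<rho> m \<notin> A"
    using no_regular by blast
  \<comment> \<open>the first time l \<ge> k congruent to m; the previous one, l - n, lies before k\<close>
  define l where "l = k + (m - k) mod int n"
  have "l mod int n = m mod int n"
    unfolding l_def by (simp add: mod_add_right_eq)
  then have "\<rho> l = \<rho> m" and "\<rho> (l - int n) = \<rho> m"
    using periodic by (metis, metis minus_mod_self2)
  then have "\<rho> l \<notin> A" and "\<rho> (l - int n) \<notin> A"
    using \<open>\<rho> m \<notin> A\<close> by simp_all
  moreover have "k \<le> l" and "l - int n < k"
    unfolding l_def using \<open>0 < n\<close> by simp_all
  moreover have "l \<noteq> k"
    using \<open>\<rho> l \<notin> A\<close> \<open>\<rho> k \<in> A\<close> by blast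
  ultimately show "\<exists>l1 l2. l1 < k \<and> k < l2 \<and> \<rho> l1 \<notin> mv_of V (\<rho> k) \<and> \<rho> l2 \<notin> mv_of V (\<rho> k)"
    unfolding A_def[symmetric] by (intro exI[of _ "l - int n"] exI[of _ l]) simp
qed

lemma essential_solution_around_loop:
  assumes MV: "multivector_field X kappa V" and "S \<subseteq> X"
    and "0 < p" and "f p = f 0" and steps: "\<forall>i<p. (f i, f (Suc i)) \<in> flow_rel kappa V S"
    and no_regular: "\<forall>A\<in>V. regular_mv dim kappa A \<longrightarrow> \<not> f ` {..<p} \<subseteq> A"
  obtains \<rho> where "essential_solution X dim kappa V \<rho>" and "\<rho> 0 = f 0" and "range \<rho> \<subseteq> S"
proof -
  define \<rho> where "\<rho> = (\<lambda>k. f (nat (k mod int p)))"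
  have sol: "is_solution X kappa V \<rho>" and range: "range \<rho> = f ` {..<p}"
    unfolding \<rho>_def by (rule periodic_solution[OF \<open>0 < p\<close> \<open>f p = f 0\<close> \<open>S \<subseteq> X\<close> steps])+
  have periodic: "\<rho> k = \<rho> (k mod int p)" for k
    unfolding \<rho>_def by simp
  have "essential_solution X dim kappa V \<rho>"
    using essential_if_periodic[OF MV sol \<open>0 < p\<close> periodic] no_regular unfolding range .
  moreover have "\<rho> 0 = f 0"
    unfolding \<rho>_def by simp
  moreover have "range \<rho> \<subseteq> S"
    unfolding range using steps unfolding flow_rel_def by auto
  ultimately show thesis
    by (rule that)
qed

lemma V_hull_invariant:
  assumes LC: "lefschetz_complex X dim kappa" and MV: "multivector_field X kappa V"
    and "U \<subseteq> X" and "U \<noteq> {}"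
    and connected: "\<forall>u\<in>U. \<forall>u'\<in>U. (u, u') \<in> (flow_rel kappa V U)\<^sup>*"
    and no_regular: "\<forall>A\<in>V. regular_mv dim kappa A \<longrightarrow> \<not> U \<subseteq> A"
  shows "invariant_set X dim kappa V (V_hull kappa V U)"
  unfolding invariant_set_def
proof
  define H where "H = V_hull kappa V U"
  define r where "r = flow_rel kappa V H"
  have "H \<subseteq> X"
    unfolding H_def using V_hull_subset_carrier[OF LC MV \<open>U \<subseteq> X\<close>] .
  fix x assume "x \<in> V_hull kappa V U"
  then have "x \<in> H" and "x \<in> X"
    using \<open>H \<subseteq> X\<close> unfolding H_def by auto
  obtain u where "u \<in> U" and separated: "\<forall>A\<in>V. regular_mv dim kappa A \<longrightarrow> \<not> (x \<in> A \<and> u \<in> A)"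
  proof (cases "regular_mv dim kappa (mv_of V x)")
    case True
    then obtain u where "u \<in> U" and "u \<notin> mv_of V x"
      using no_regular mv_of_mem(1)[OF MV \<open>x \<in> X\<close>] by blast
    then show thesis
      using that mv_of_eq[OF MV] by (metis \<open>x \<in> X\<close> mv_of_mem(2))
  next
    case False
    then show thesis
      using that \<open>U \<noteq> {}\<close> mv_of_eq[OF MV] by (metis all_not_in_conv mv_of_mem(2)[OF MV \<open>x \<in> X\<close>])
  qed
  have "(x, x) \<in> r"
    unfolding r_def flow_rel_def using \<open>x \<in> H\<close> mem_flow_map_self[OF MV \<open>x \<in> X\<close>] by blast
  obtain m n where "(x, u) \<in> r ^^ m" and "(u, x) \<in> r ^^ n"
    using V_hull_subset_flow_loops_through[OF LC MV \<open>U \<subseteq> X\<close> connected] \<open>x \<in> H\<close> \<open>u \<in> U\<close>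
    unfolding flow_loops_through_def r_def H_def rtrancl_power by blast
  \<comment> \<open>pad both arcs by the loop at x, so that the period below is positive\<close>
  have "(x, u) \<in> r ^^ Suc m"
    using \<open>(x, x) \<in> r\<close> \<open>(x, u) \<in> r ^^ m\<close> by (rule relpow_Suc_I2)
  moreover have "(u, x) \<in> r ^^ Suc n"
    using \<open>(u, x) \<in> r ^^ n\<close> \<open>(x, x) \<in> r\<close> by (rule relpow_Suc_I)
  ultimately obtain f where "f 0 = x" and "f (Suc m) = u" and "f (Suc m + Suc n) = x"
    and steps: "\<forall>i<Suc m + Suc n. (f i, f (Suc i)) \<in> r"
    by (rule relpow_concat_fun)
  have "x \<in> f ` {..<Suc m + Suc n}" and "u \<in> f ` {..<Suc m + Suc n}"
    using \<open>f 0 = x\<close> \<open>f (Suc m) = u\<close> by (force, force)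
  then have "\<forall>A\<in>V. regular_mv dim kappa A \<longrightarrow> \<not> f ` {..<Suc m + Suc n} \<subseteq> A"
    using separated by blast
  then obtain \<rho> where "essential_solution X dim kappa V \<rho>" and "\<rho> 0 = x" and "range \<rho> \<subseteq> H"
    using essential_solution_around_loop[OF MV \<open>H \<subseteq> X\<close> _ _ steps[unfolded r_def]]
      \<open>f 0 = x\<close> \<open>f (Suc m + Suc n) = x\<close> by auto
  then show "\<exists>\<rho>. essential_solution X dim kappa V \<rho> \<and> \<rho> 0 = x \<and> range \<rho> \<subseteq> V_hull kappa V U"
    unfolding H_def by blast
qed

lemma V_hull_isolated_invariant:
  assumes LC: "lefschetz_complex X dim kappa" and MV: "multivector_field X kappa V"
    and "U \<subseteq> X" and "U \<noteq> {}"
    and connected: "\<forall>u\<in>U. \<forall>u'\<in>U. (u, u') \<in> (flow_rel kappa V U)\<^sup>*"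
    and no_regular: "\<forall>A\<in>V. regular_mv dim kappa A \<longrightarrow> \<not> U \<subseteq> A"
  shows "V_hull kappa V U \<noteq> {}" and "isolated_invariant_set X dim kappa V (V_hull kappa V U)"
proof -
  show "V_hull kappa V U \<noteq> {}"
    using \<open>U \<noteq> {}\<close> subset_V_hull[of U kappa V] by blast
  have "isolates X kappa V (lcl kappa (V_hull kappa V U)) (V_hull kappa V U)"
    using isolates_lcl[OF LC MV V_hull_subset_carrier[OF LC MV \<open>U \<subseteq> X\<close>]
        V_hull_V_compatible[OF LC MV \<open>U \<subseteq> X\<close>] V_hull_locally_closed] .
  then show "isolated_invariant_set X dim kappa V (V_hull kappa V U)"
    unfolding isolated_invariant_set_def
    using V_hull_invariant[OF assms] by blast
qed

section \<open>Limit sets\<close>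

definition tail_values :: "(int \<Rightarrow> 'a) \<Rightarrow> 'a set" where
  "tail_values \<psi> = (\<Inter>t\<in>{0..}. \<psi> ` {t..})"

lemma omega_limit_eq: "omega_limit kappa V \<phi> = V_hull kappa V (tail_values \<phi>)"
  unfolding omega_limit_def tail_values_def ..

lemma alpha_limit_eq: "alpha_limit kappa V \<phi> = V_hull kappa V (tail_values (\<lambda>s. \<phi> (- s)))"
proof -
  have "(\<lambda>s. \<phi> (- s)) ` {t..} = \<phi> ` {..- t}" for t :: int
    by (force intro: image_eqI[of _ _ "- _"])
  then have "tail_values (\<lambda>s. \<phi> (- s)) = (\<Inter>t\<in>{0::int..}. \<phi> ` {..- t})"
    unfolding tail_values_def by simp
  also have "\<dots> = (\<Inter>t\<in>uminus ` {0..}. \<phi> ` {..t})"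
    by (simp only: INF_image comp_def)
  also have "uminus ` {0::int..} = {..0}"
    by simp
  finally show ?thesis
    unfolding alpha_limit_def by simp
qed

lemma tail_values_recurrent:
  assumes "u \<in> tail_values \<psi>"
  obtains s where "t \<le> s" and "\<psi> s = u"
proof -
  have "u \<in> \<psi> ` {max t 0..}"
    using assms unfolding tail_values_def by simp
  then show thesis
    using that by force
qed

lemma tail_values_eventually:
  assumes "finite (range \<psi>)"
  obtains T where "\<forall>s\<ge>T. \<psi> s \<in> tail_values \<psi>"
proof -
  have "\<forall>x\<in>range \<psi> - tail_values \<psi>. \<exists>t\<ge>0. x \<notin> \<psi> ` {t..}"
    unfolding tail_values_def by blast
  then obtain last_time where last_time: "\<forall>x\<in>range \<psi> - tail_values \<psi>. x \<notin> \<psi> ` {last_time x..}"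
    by metis
  define T where "T = Max (insert 0 (last_time ` (range \<psi> - tail_values \<psi>)))"
  have "\<psi> s \<in> tail_values \<psi>" if "T \<le> s" for s
  proof (rule ccontr)
    assume "\<psi> s \<notin> tail_values \<psi>"
    then have "\<psi> s \<in> range \<psi> - tail_values \<psi>"
      by blast
    moreover from this have "last_time (\<psi> s) \<le> T"
      unfolding T_def using assms by (intro Max_ge) auto
    ultimately show False
      using last_time \<open>T \<le> s\<close> by force
  qed
  then show thesis
    using that by blast
qed

lemma solution_segment_in_flow_rel:
  assumes "is_solution X kappa V \<phi>" and "s0 \<le> s1" and "\<phi> ` {s0..s1} \<subseteq> U"
  shows "(\<phi> s0, \<phi> s1) \<in> (flow_rel kappa V U)\<^sup>*"
proof -
  have "s \<le> s1 \<longrightarrow> (\<phi> s0, \<phi> s) \<in> (flow_rel kappa V U)\<^sup>*" if "s0 \<le> s" for s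
    using that
  proof (induction s rule: int_ge_induct)
    case (step s)
    show ?case
    proof
      assume "s + 1 \<le> s1"
      then have "(\<phi> s, \<phi> (s + 1)) \<in> flow_rel kappa V U"
        using assms step.hyps unfolding is_solution_def flow_rel_def by auto
      then show "(\<phi> s0, \<phi> (s + 1)) \<in> (flow_rel kappa V U)\<^sup>*"
        using step.IH \<open>s + 1 \<le> s1\<close> by (simp add: rtrancl_into_rtrancl)
    qed
  qed simp
  then show ?thesis
    using assms(2) by blast
qed

lemma omega_limit_isolated_invariant:
  assumes LC: "lefschetz_complex X dim kappa" and MV: "multivector_field X kappa V"
    and ES: "essential_solution X dim kappa V \<phi>"
  shows "omega_limit kappa V \<phi> \<noteq> {}" and "isolated_invariant_set X dim kappa V (omega_limit kappa V \<phi>)"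
proof -
  define U where "U = tail_values \<phi>"
  have sol: "is_solution X kappa V \<phi>"
    using ES unfolding essential_solution_def by blast
  then have "range \<phi> \<subseteq> X"
    unfolding is_solution_def by blast
  moreover have "finite X"
    using LC unfolding lefschetz_complex_def by blast
  ultimately obtain T where tail: "\<forall>s\<ge>T. \<phi> s \<in> U"
    unfolding U_def using tail_values_eventually finite_subset by metis
  have "U \<subseteq> X"
    using \<open>range \<phi> \<subseteq> X\<close> unfolding U_def tail_values_def by blast
  have "U \<noteq> {}"
    using tail by blast
  have "\<forall>u\<in>U. \<forall>u'\<in>U. (u, u') \<in> (flow_rel kappa V U)\<^sup>*"
  proof (intro ballI)
    fix u u' assume "u \<in> U" and "u' \<in> U"
    obtain s0 where "T \<le> s0" and "\<phi> s0 = u"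
      using \<open>u \<in> U\<close> unfolding U_def by (rule tail_values_recurrent)
    obtain s1 where "s0 \<le> s1" and "\<phi> s1 = u'"
      using \<open>u' \<in> U\<close> unfolding U_def by (rule tail_values_recurrent)
    have "\<phi> ` {s0..s1} \<subseteq> U"
      using tail \<open>T \<le> s0\<close> by auto
    then show "(u, u') \<in> (flow_rel kappa V U)\<^sup>*"
      using solution_segment_in_flow_rel[OF sol \<open>s0 \<le> s1\<close>] \<open>\<phi> s0 = u\<close> \<open>\<phi> s1 = u'\<close> by blast
  qed
  moreover have "\<forall>A\<in>V. regular_mv dim kappa A \<longrightarrow> \<not> U \<subseteq> A"
  proof (intro ballI impI notI)
    fix A assume "A \<in> V" and "regular_mv dim kappa A" and "U \<subseteq> A"
    then have "mv_of V (\<phi> T) = A"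
      using tail mv_of_eq[OF MV] by blast
    then obtain l where "T < l" and "\<phi> l \<notin> A"
      using ES \<open>regular_mv dim kappa A\<close> unfolding essential_solution_def by metis
    moreover have "\<phi> l \<in> U"
      using tail \<open>T < l\<close> by simp
    ultimately show False
      using \<open>U \<subseteq> A\<close> by blast
  qed
  ultimately show "omega_limit kappa V \<phi> \<noteq> {}" and "isolated_invariant_set X dim kappa V (omega_limit kappa V \<phi>)"
    unfolding omega_limit_eq U_def[symmetric]
    using V_hull_isolated_invariant[OF LC MV \<open>U \<subseteq> X\<close> \<open>U \<noteq> {}\<close>] by blast+
qed

lemma alpha_limit_isolated_invariant:
  assumes LC: "lefschetz_complex X dim kappa" and MV: "multivector_field X kappa V"
    and ES: "essential_solution X dim kappa V \<phi>"
  shows "alpha_limit kappa V \<phi> \<noteq> {}" and "isolated_invariant_set X dim kappa V (alpha_limit kappa V \<phi>)"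
proof -
  define U where "U = tail_values (\<lambda>s. \<phi> (- s))"
  have sol: "is_solution X kappa V \<phi>"
    using ES unfolding essential_solution_def by blast
  then have "range \<phi> \<subseteq> X"
    unfolding is_solution_def by blast
  moreover have "finite X"
    using LC unfolding lefschetz_complex_def by blast
  ultimately have "finite (range (\<lambda>s. \<phi> (- s)))"
    by (metis finite_subset image_subsetI rangeI subsetD)
  then obtain T where "\<forall>s\<ge>T. \<phi> (- s) \<in> U"
    unfolding U_def by (rule tail_values_eventually)
  then have tail: "\<forall>s\<le>- T. \<phi> s \<in> U"
    by (metis minus_minus neg_le_iff_le)
  have "U \<subseteq> X"
    using \<open>range \<phi> \<subseteq> X\<close> unfolding U_def tail_values_def by blast
  have "U \<noteq> {}"
    using tail by blast
  have "\<forall>u\<in>U. \<forall>u'\<in>U. (u, u') \<in> (flow_rel kappa V U)\<^sup>*"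
  proof (intro ballI)
    fix u u' assume "u \<in> U" and "u' \<in> U"
    obtain t1 where "T \<le> t1" and "\<phi> (- t1) = u'"
      using \<open>u' \<in> U\<close> unfolding U_def by (rule tail_values_recurrent)
    obtain t0 where "t1 \<le> t0" and "\<phi> (- t0) = u"
      using \<open>u \<in> U\<close> unfolding U_def by (rule tail_values_recurrent)
    have segment: "\<phi> ` {- t0..- t1} \<subseteq> U"
      using tail \<open>T \<le> t1\<close> by auto
    show "(u, u') \<in> (flow_rel kappa V U)\<^sup>*"
      using solution_segment_in_flow_rel[OF sol _ segment] \<open>t1 \<le> t0\<close> \<open>\<phi> (- t0) = u\<close> \<open>\<phi> (- t1) = u'\<close>
      by simp
  qed
  moreover have "\<forall>A\<in>V. regular_mv dim kappa A \<longrightarrow> \<not> U \<subseteq> A"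
  proof (intro ballI impI notI)
    fix A assume "A \<in> V" and "regular_mv dim kappa A" and "U \<subseteq> A"
    then have "mv_of V (\<phi> (- T)) = A"
      using tail mv_of_eq[OF MV] by blast
    then obtain l where "l < - T" and "\<phi> l \<notin> A"
      using ES \<open>regular_mv dim kappa A\<close> unfolding essential_solution_def by metis
    moreover have "\<phi> l \<in> U"
      using tail \<open>l < - T\<close> by simp
    ultimately show False
      using \<open>U \<subseteq> A\<close> by blast
  qed
  ultimately show "alpha_limit kappa V \<phi> \<noteq> {}" and "isolated_invariant_set X dim kappa V (alpha_limit kappa V \<phi>)"
    unfolding alpha_limit_eq U_def[symmetric]
    using V_hull_isolated_invariant[OF LC MV \<open>U \<subseteq> X\<close> \<open>U \<noteq> {}\<close>] by blast+
qed

theorem mainTheorem2: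
  fixes X :: "'a set" and dim :: "'a \<Rightarrow> nat" and kappa :: "'a \<Rightarrow> 'a \<Rightarrow> 'f::field"
    and V :: "'a set set" and \<phi> :: "int \<Rightarrow> 'a"
  assumes "lefschetz_complex X dim kappa"
    and "multivector_field X kappa V"
    and "essential_solution X dim kappa V \<phi>"
  shows "alpha_limit kappa V \<phi> \<noteq> {} \<and> isolated_invariant_set X dim kappa V (alpha_limit kappa V \<phi>)
       \<and> omega_limit kappa V \<phi> \<noteq> {} \<and> isolated_invariant_set X dim kappa V (omega_limit kappa V \<phi>)"
  using alpha_limit_isolated_invariant[OF assms] omega_limit_isolated_invariant[OF assms] by blast

end
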